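(* For $\lambda\in\mathbb{R}$ let $\mathfrak{n}_\lambda$ be the real $7$-dimensional Lie algebra with basis $e_1,\dots,e_7$ whose nonzero brackets (up to antisymmetry) are $[e_1,e_2]=e_3$, $[e_1,e_3]=e_4$, $[e_1,e_4]=e_5$, $[e_1,e_5]=e_6$, $[e_1,e_6]=e_7$, $[e_2,e_3]=e_5$, $[e_2,e_4]=e_6$, $[e_2,e_5]=\lambda e_7$, $[e_3,e_4]=(1-\lambda)e_7$. Then $\mathfrak{n}_\lambda$ is an Einstein nilradical if and only if $\lambda\notin\{0,1\}$.
   Context: A real nilpotent Lie algebra $\mathfrak{n}$ is called an Einstein nilradical if it admits an inner product such that the left-invariant Riemannian metric it defines on the simply connected nilpotent Lie group with Lie algebra $\mathfrak{n}$ is a nilsoliton, i.e. its Ricci operator satisfies $\mathrm{Ric}=c\,\mathrm{Id}+D$ for some $c\in\mathbb{R}$ and some derivation $D$ of $\mathfrak{n}$. Brackets of basis elements not listed are zero. *)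

theory Defs
  imports "HOL-Analysis.Analysis"
begin

definition is_inner_product :: "(real^'n \<Rightarrow> real^'n \<Rightarrow> real) \<Rightarrow> bool" where
  "is_inner_product ip \<longleftrightarrow> bilinear ip \<and> (\<forall>x y. ip x y = ip y x) \<and> (\<forall>x. x \<noteq> 0 \<longrightarrow> ip x x > 0)"

definition is_orthonormal_basis ::
  "(real^'n \<Rightarrow> real^'n \<Rightarrow> real) \<Rightarrow> ('n::finite \<Rightarrow> real^'n) \<Rightarrow> bool" where
  "is_orthonormal_basis ip b \<longleftrightarrow> (\<forall>i j. ip (b i) (b j) = (if i = j then 1 else 0))"

text \<open>Ricci form of the left-invariant metric defined by the inner product ip on a
  nilpotent Lie algebra with bracket B, computed in an orthonormal basis b:
  ric(x,y) = -1/2 sum_{i,j} <[x,b_i],b_j><[y,b_i],b_j> + 1/4 sum_{i,j} <[b_i,b_j],x><[b_i,b_j],y>.\<close>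
definition ricci_form_nil ::
  "(real^'n \<Rightarrow> real^'n \<Rightarrow> real) \<Rightarrow> ('n::finite \<Rightarrow> real^'n) \<Rightarrow> (real^'n \<Rightarrow> real^'n \<Rightarrow> real^'n)
     \<Rightarrow> real^'n \<Rightarrow> real^'n \<Rightarrow> real" where
  "ricci_form_nil ip b B x y =
     - (1/2) * (\<Sum>i\<in>UNIV. \<Sum>j\<in>UNIV. ip (B x (b i)) (b j) * ip (B y (b i)) (b j))
     + (1/4) * (\<Sum>i\<in>UNIV. \<Sum>j\<in>UNIV. ip (B (b i) (b j)) x * ip (B (b i) (b j)) y)"

definition is_derivation ::
  "(real^'n \<Rightarrow> real^'n \<Rightarrow> real^'n) \<Rightarrow> (real^'n \<Rightarrow> real^'n) \<Rightarrow> bool" where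
  "is_derivation B D \<longleftrightarrow> linear D \<and> (\<forall>x y. D (B x y) = B (D x) y + B x (D y))"

text \<open>The metric given by ip is a nilsoliton: Ric = c Id + D with D a derivation
  (Ric being the operator with ip (Ric x) y = ricci form (x,y)).\<close>
definition is_nilsoliton ::
  "(real^'n::finite \<Rightarrow> real^'n \<Rightarrow> real^'n) \<Rightarrow> (real^'n \<Rightarrow> real^'n \<Rightarrow> real) \<Rightarrow> bool" where
  "is_nilsoliton B ip \<longleftrightarrow>
     (\<exists>b. is_orthonormal_basis ip b \<and>
       (\<exists>c D. is_derivation B D \<and>
          (\<forall>x y. ricci_form_nil ip b B x y = ip (c *\<^sub>R x + D x) y)))"

definition einstein_nilradical :: "(real^'n::finite \<Rightarrow> real^'n \<Rightarrow> real^'n) \<Rightarrow> bool" where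
  "einstein_nilradical B \<longleftrightarrow> (\<exists>ip. is_inner_product ip \<and> is_nilsoliton B ip)"

definition e :: "nat \<Rightarrow> real^7" where
  "e k = axis (of_nat k) 1"

definition sc :: "real \<Rightarrow> nat \<Rightarrow> nat \<Rightarrow> real^7" where
  "sc t i j =
    (if i = 1 \<and> j = 2 then e 3
     else if i = 1 \<and> j = 3 then e 4
     else if i = 1 \<and> j = 4 then e 5
     else if i = 1 \<and> j = 5 then e 6
     else if i = 1 \<and> j = 6 then e 7
     else if i = 2 \<and> j = 3 then e 5
     else if i = 2 \<and> j = 4 then e 6
     else if i = 2 \<and> j = 5 then t *\<^sub>R e 7
     else if i = 3 \<and> j = 4 then (1 - t) *\<^sub>R e 7
     else 0)"

definition bc :: "real \<Rightarrow> nat \<Rightarrow> nat \<Rightarrow> real^7" where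
  "bc t i j = sc t i j - sc t j i"

definition nbr :: "real \<Rightarrow> real^7 \<Rightarrow> real^7 \<Rightarrow> real^7" where
  "nbr t x y = (\<Sum>i\<in>{1..7}. \<Sum>j\<in>{1..7}.
       (x $ of_nat i * y $ of_nat j) *\<^sub>R bc t i j)"

end

theory Submission
  imports Defs
begin

text \<open>
  For \<open>t \<notin> {0, 1}\<close> an explicit metric works: declaring \<open>e\<^sub>1, \<dots>, e\<^sub>7\<close> orthogonal with
  suitable lengths, \<open>Ric = -5/2 Id + D\<close> for the derivation \<open>D e\<^sub>k = k/2 e\<^sub>k\<close>.  The soliton
  equations become linear in the nine ratios \<open>|[e\<^sub>i, e\<^sub>j]|\<^sup>2 / (|e\<^sub>i|\<^sup>2 |e\<^sub>j|\<^sup>2)\<close>, and they are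
  solved once \<open>Q \<in> (2/3, 6/5)\<close> is a root of \<open>(|t| + |1 - t|)\<^sup>2 Q\<^sup>2 (3Q - 2) = (6 - 5Q)\<^sup>2\<close>.

  For \<open>t \<in> {0, 1}\<close> one of \<open>[e\<^sub>2, e\<^sub>5]\<close>, \<open>[e\<^sub>3, e\<^sub>4]\<close> vanishes, and then every derivation
  preserves the flag \<open>\<langle>e\<^sub>k, \<dots>, e\<^sub>7\<rangle>\<close> and acts on its quotients by \<open>k \<alpha>\<close>.  Gram--Schmidt
  applied to \<open>e\<^sub>7, \<dots>, e\<^sub>1\<close> gives an orthonormal frame \<open>g\<^sub>k\<close> adapted to this flag; as
  \<open>D = Ric - c Id\<close> is symmetric, \<open>D g\<^sub>k = k \<alpha> g\<^sub>k\<close>.  If \<open>\<alpha> = 0\<close> the metric is Einstein, which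
  is impossible since \<open>tr Ric < 0 \<le> Ric(g\<^sub>7, g\<^sub>7)\<close>.  If \<open>\<alpha> \<noteq> 0\<close> the frame grades the algebra,
  and a combination of the diagonal entries \<open>Ric(g\<^sub>k, g\<^sub>k) = c + k \<alpha>\<close> that kills \<open>c\<close> and \<open>\<alpha>\<close>
  shows \<open>\<langle>[g\<^sub>1, g\<^sub>4], g\<^sub>5\<rangle>\<^sup>2 = \<langle>[g\<^sub>2, g\<^sub>5], g\<^sub>7\<rangle>\<^sup>2 = 0\<close> for \<open>t = 0\<close>, and
  \<open>\<langle>[g\<^sub>1, g\<^sub>2], g\<^sub>3\<rangle>\<^sup>2 = \<langle>[g\<^sub>3, g\<^sub>4], g\<^sub>7\<rangle>\<^sup>2 = 0\<close> for \<open>t = 1\<close>.  By the grading this means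
  \<open>[g\<^sub>1, g\<^sub>4] = 0\<close>, resp. \<open>[g\<^sub>1, g\<^sub>2] = 0\<close>, which the triangular shape of the frame rules out.
\<close>

lemma atLeastAtMost_1_7: "{1..7::nat} = {1,2,3,4,5,6,7}"
  by auto

lemma UNIV_7_eq_image_of_nat: "(UNIV::7 set) = of_nat ` {1..7}"
proof -
  have "card (of_nat ` {1..7::nat} :: 7 set) = card (UNIV::7 set)"
    unfolding atLeastAtMost_1_7 by simp
  then show ?thesis
    by (intro card_subset_eq[symmetric]) auto
qed

lemma inj_on_of_nat_7: "inj_on (of_nat :: nat \<Rightarrow> 7) {1..7}"
  by (rule eq_card_imp_inj_on) (unfold atLeastAtMost_1_7, simp_all)

lemma of_nat_7_eq_iff: "i \<in> {1..7} \<Longrightarrow> j \<in> {1..7} \<Longrightarrow> (of_nat i :: 7) = of_nat j \<longleftrightarrow> i = j"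
  using inj_on_of_nat_7 by (auto dest: inj_onD)

text \<open>The seventh coordinate of \<open>real^7\<close> has index \<open>of_nat 7 = (0 :: 7)\<close>.\<close>
lemma numeral_7_eq_0: "(7::7) = 0"
  by simp

lemma vec7_eq_iff:
  "(x::real^7) = y \<longleftrightarrow>
     x$1 = y$1 \<and> x$2 = y$2 \<and> x$3 = y$3 \<and> x$4 = y$4 \<and> x$5 = y$5 \<and> x$6 = y$6 \<and> x$0 = y$0"
proof -
  have "x = y \<longleftrightarrow> (\<forall>k\<in>{1..7}. x $ of_nat k = y $ of_nat k)"
    unfolding vec_eq_iff by (metis UNIV_7_eq_image_of_nat imageE UNIV_I)
  then show ?thesis
    unfolding atLeastAtMost_1_7 by (simp add: numeral_7_eq_0)
qed

lemma e_nth: "e k $ i = (if i = of_nat k then 1 else 0)"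
  by (simp add: e_def axis_def)

lemma e_nth_of_nat: "k \<in> {1..7} \<Longrightarrow> l \<in> {1..7} \<Longrightarrow> e k $ of_nat l = (if k = l then 1 else 0)"
  by (auto simp: e_nth of_nat_7_eq_iff)

lemma vec7_expansion: "(v::real^7) = (\<Sum>j\<in>{1..7}. v $ of_nat j *\<^sub>R e j)"
  unfolding vec7_eq_iff atLeastAtMost_1_7 by (simp add: e_nth, simp add: numeral_7_eq_0)

lemma nbr_nth:
  "nbr t x y $ 1 = 0"
  "nbr t x y $ 2 = 0"
  "nbr t x y $ 3 = x$1*y$2 - x$2*y$1"
  "nbr t x y $ 4 = x$1*y$3 - x$3*y$1"
  "nbr t x y $ 5 = x$1*y$4 - x$4*y$1 + x$2*y$3 - x$3*y$2"
  "nbr t x y $ 6 = x$1*y$5 - x$5*y$1 + x$2*y$4 - x$4*y$2"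
  "nbr t x y $ 0 = x$1*y$6 - x$6*y$1 + t*(x$2*y$5 - x$5*y$2) + (1-t)*(x$3*y$4 - x$4*y$3)"
  unfolding nbr_def atLeastAtMost_1_7 by (simp_all add: bc_def sc_def e_nth algebra_simps)

lemma bilinear_nbr: "bilinear (nbr t)"
  unfolding bilinear_def linear_iff by (simp add: vec7_eq_iff nbr_nth algebra_simps)

lemma nbr_antisym: "nbr t x y = - nbr t y x"
  by (simp add: vec7_eq_iff nbr_nth algebra_simps)

lemma nbr_self: "nbr t x x = 0"
  by (simp add: vec7_eq_iff nbr_nth algebra_simps)

definition orthonormal_on :: "(real^'n \<Rightarrow> real^'n \<Rightarrow> real) \<Rightarrow> 'k set \<Rightarrow> ('k \<Rightarrow> real^'n) \<Rightarrow> bool" where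
  "orthonormal_on ip K g \<longleftrightarrow> (\<forall>k\<in>K. \<forall>l\<in>K. ip (g k) (g l) = (if k = l then 1 else 0))"

lemma bilinear_product:
  "linear f \<Longrightarrow> linear h \<Longrightarrow> bilinear (\<lambda>u v. (f u :: real) * h v)"
  unfolding bilinear_def linear_iff
  by (simp add: linear_cmul linear_add algebra_simps)

locale inner_form =
  fixes ip :: "real^'n::finite \<Rightarrow> real^'n \<Rightarrow> real"
  assumes inner_product: "is_inner_product ip"
begin

lemma bilinear: "bilinear ip"
  using inner_product by (simp add: is_inner_product_def)

lemma commute: "ip x y = ip y x"
  using inner_product by (simp add: is_inner_product_def)

lemma positive: "x \<noteq> 0 \<Longrightarrow> ip x x > 0"
  using inner_product by (simp add: is_inner_product_def)

lemma linear_left: "linear (\<lambda>x. ip x y)"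
  using bilinear by (simp add: bilinear_def)

lemma linear_right: "linear (ip x)"
  using bilinear by (simp add: bilinear_def)

lemma sum_left: "ip (\<Sum>k\<in>K. f k) y = (\<Sum>k\<in>K. ip (f k) y)"
  using linear_sum[OF linear_left] by blast

lemma scaleR_left: "ip (a *\<^sub>R x) y = a * ip x y"
  using bilinear_lmul[OF bilinear] by simp

lemma scaleR_right: "ip x (a *\<^sub>R y) = a * ip x y"
  using bilinear_rmul[OF bilinear] by simp

lemmas add_left = bilinear_ladd[OF bilinear]
lemmas diff_left = bilinear_lsub[OF bilinear]
lemmas minus_left = bilinear_lneg[OF bilinear]
lemmas zero_left = bilinear_lzero[OF bilinear]

context
  fixes K :: "'k set" and g :: "'k \<Rightarrow> real^'n"
  assumes finite: "finite K" and card: "card K = CARD('n)" and orthonormal: "orthonormal_on ip K g"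
begin

lemma orthonormal_expansion: "v = (\<Sum>k\<in>K. ip v (g k) *\<^sub>R g k)"
proof -
  have gkl: "ip (g k) (g l) = (if k = l then 1 else 0)" if "k \<in> K" "l \<in> K" for k l
    using orthonormal that by (simp add: orthonormal_on_def)
  have inj: "inj_on g K"
  proof (rule inj_onI)
    fix k l assume "k \<in> K" "l \<in> K" "g k = g l"
    then show "k = l" using gkl[of k l] gkl[of l l] by (auto split: if_splits)
  qed
  have indep: "independent (g ` K)"
  proof (rule independent_if_scalars_zero)
    show "finite (g ` K)" using finite by simp
    fix f x assume s: "(\<Sum>x\<in>g ` K. f x *\<^sub>R x) = 0" and "x \<in> g ` K"
    then obtain l where l: "l \<in> K" "x = g l" by auto
    have "0 = ip (\<Sum>k\<in>K. f (g k) *\<^sub>R g k) (g l)"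
      using s zero_left by (simp add: sum.reindex[OF inj])
    also have "\<dots> = (\<Sum>k\<in>K. if k = l then f (g k) else 0)"
      unfolding sum_left scaleR_left by (rule sum.cong) (simp_all add: gkl l)
    finally show "f x = 0" using l finite by simp
  qed
  have "card (g ` K) = dim (UNIV :: (real^'n) set)"
    using card inj by (simp add: card_image)
  then have "v \<in> span (g ` K)"
    using card_eq_dim[of "g ` K" UNIV] indep finite by auto
  then obtain u where "(\<Sum>x\<in>g ` K. u x *\<^sub>R x) = v"
    using finite by (auto simp: span_finite)
  then have v: "v = (\<Sum>k\<in>K. u (g k) *\<^sub>R g k)" by (simp add: sum.reindex[OF inj])
  have "ip v (g l) = u (g l)" if "l \<in> K" for l
  proof -
    have "ip v (g l) = (\<Sum>k\<in>K. if k = l then u (g k) else 0)"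
      by (subst v, unfold sum_left scaleR_left) (rule sum.cong, simp_all add: gkl that)
    then show ?thesis using that finite by simp
  qed
  then show ?thesis by (subst v) (rule sum.cong, auto)
qed

lemma parseval: "ip u v = (\<Sum>k\<in>K. ip u (g k) * ip v (g k))"
  by (subst orthonormal_expansion[of u]) (simp add: sum_left scaleR_left commute[of "g _" v])

lemma orthonormal_trace_eq:
  fixes J :: "'j set" and b :: "'j \<Rightarrow> real^'n" and \<beta> :: "real^'n \<Rightarrow> real^'n \<Rightarrow> real"
  assumes J: "finite J" "card J = CARD('n)" "orthonormal_on ip J b" and "bilinear \<beta>"
  shows "(\<Sum>j\<in>J. \<beta> (b j) (b j)) = (\<Sum>k\<in>K. \<beta> (g k) (g k))"
proof -
  have \<beta>_left: "linear (\<lambda>x. \<beta> x w)" and \<beta>_right: "linear (\<beta> w)" for w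
    using \<open>bilinear \<beta>\<close> by (simp_all add: bilinear_def)
  let ?c = "\<lambda>j k. ip (b j) (g k)"
  have "\<beta> (b j) (b j) = (\<Sum>k\<in>K. \<Sum>l\<in>K. ?c j k * ?c j l * \<beta> (g k) (g l))" for j
    by (subst (1 2) orthonormal_expansion[of "b j"])
      (simp add: linear_sum[OF \<beta>_left] linear_cmul[OF \<beta>_left] linear_sum[OF \<beta>_right]
        linear_cmul[OF \<beta>_right] sum_distrib_left, subst sum.swap, simp add: ac_simps)
  then have "(\<Sum>j\<in>J. \<beta> (b j) (b j)) = (\<Sum>k\<in>K. \<Sum>l\<in>K. (\<Sum>j\<in>J. ?c j k * ?c j l) * \<beta> (g k) (g l))"
    by (simp add: sum_distrib_right sum.swap[of _ J])
  also have "\<dots> = (\<Sum>k\<in>K. \<Sum>l\<in>K. ip (g k) (g l) * \<beta> (g k) (g l))"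
    by (simp add: inner_form.parseval[OF inner_form_axioms J, symmetric] commute[of "b _"])
  also have "\<dots> = (\<Sum>k\<in>K. \<Sum>l\<in>K. if l = k then \<beta> (g k) (g k) else 0)"
    using orthonormal by (intro sum.cong refl) (auto simp: orthonormal_on_def)
  finally show ?thesis using finite by simp
qed

text \<open>Both sums in the Ricci form are traces of bilinear forms, so they may be computed in any
  orthonormal frame.\<close>
lemma ricci_form_nil_orthonormal:
  assumes b: "is_orthonormal_basis ip b" and B: "bilinear B"
  shows "ricci_form_nil ip b B x y =
     - (1/2) * (\<Sum>k\<in>K. \<Sum>l\<in>K. ip (B x (g k)) (g l) * ip (B y (g k)) (g l))
     + (1/4) * (\<Sum>k\<in>K. \<Sum>l\<in>K. ip (B (g k) (g l)) x * ip (B (g k) (g l)) y)"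
proof -
  have U: "finite (UNIV::'n set)" "card (UNIV::'n set) = CARD('n)" "orthonormal_on ip UNIV b"
    using b by (simp_all add: is_orthonormal_basis_def orthonormal_on_def)
  note parseval_b = inner_form.parseval[OF inner_form_axioms U]
  note trace_b = orthonormal_trace_eq[OF U]
  have B_left: "linear (\<lambda>u. ip (B u w) z)" for w z
    using linear_compose[of "\<lambda>u. B u w", OF _ linear_left] B by (simp add: bilinear_def o_def)
  have B_right: "linear (\<lambda>u. ip (B w u) z)" for w z
    using linear_compose[of "B w", OF _ linear_left] B by (simp add: bilinear_def o_def)
  have B_right': "linear (\<lambda>u. ip z (B w u))" for w z
    using linear_compose[of "B w", OF _ linear_right] B by (simp add: bilinear_def o_def)
  have "(\<Sum>i\<in>UNIV. \<Sum>j\<in>UNIV. ip (B x (b i)) (b j) * ip (B y (b i)) (b j))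
      = (\<Sum>i\<in>UNIV. ip (B x (b i)) (B y (b i)))"
    by (rule sum.cong[OF refl], rule parseval_b[symmetric])
  also have "\<dots> = (\<Sum>k\<in>K. ip (B x (g k)) (B y (g k)))"
    by (rule trace_b) (use B_right' linear_compose[of "B x", OF _ linear_left] B in \<open>simp add: bilinear_def o_def\<close>)
  also have "\<dots> = (\<Sum>k\<in>K. \<Sum>l\<in>K. ip (B x (g k)) (g l) * ip (B y (g k)) (g l))"
    by (rule sum.cong[OF refl], rule parseval)
  finally have first: "(\<Sum>i\<in>UNIV. \<Sum>j\<in>UNIV. ip (B x (b i)) (b j) * ip (B y (b i)) (b j))
      = (\<Sum>k\<in>K. \<Sum>l\<in>K. ip (B x (g k)) (g l) * ip (B y (g k)) (g l))" .
  have "(\<Sum>i\<in>UNIV. \<Sum>j\<in>UNIV. ip (B (b i) (b j)) x * ip (B (b i) (b j)) y)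
      = (\<Sum>i\<in>UNIV. \<Sum>l\<in>K. ip (B (b i) (g l)) x * ip (B (b i) (g l)) y)"
    by (rule sum.cong[OF refl], rule trace_b, rule bilinear_product[OF B_right B_right])
  also have "\<dots> = (\<Sum>l\<in>K. \<Sum>k\<in>K. ip (B (g k) (g l)) x * ip (B (g k) (g l)) y)"
    by (subst sum.swap) (rule sum.cong[OF refl], rule trace_b, rule bilinear_product[OF B_left B_left])
  also have "\<dots> = (\<Sum>k\<in>K. \<Sum>l\<in>K. ip (B (g k) (g l)) x * ip (B (g k) (g l)) y)"
    by (rule sum.swap)
  finally have second: "(\<Sum>i\<in>UNIV. \<Sum>j\<in>UNIV. ip (B (b i) (b j)) x * ip (B (b i) (b j)) y)
      = (\<Sum>k\<in>K. \<Sum>l\<in>K. ip (B (g k) (g l)) x * ip (B (g k) (g l)) y)" .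
  show ?thesis by (simp only: ricci_form_nil_def first second)
qed

end
end

section \<open>Diagonal metrics: nilsolitons for \<open>t \<notin> {0, 1}\<close>\<close>

lemma is_orthonormal_basis_of_orthonormal_on_1_7:
  assumes "orthonormal_on ip {1..7} g"
  shows "is_orthonormal_basis ip (\<lambda>i::7. g (inv_into {1..7} of_nat i))"
proof -
  have "inv_into {1..7} of_nat i \<in> {1..7::nat}" for i :: 7
    by (metis UNIV_7_eq_image_of_nat UNIV_I inv_into_into)
  moreover have "inv_into {1..7} of_nat i = inv_into {1..7} of_nat j \<longleftrightarrow> i = j" for i j :: 7
    by (metis UNIV_7_eq_image_of_nat UNIV_I f_inv_into_f)
  ultimately show ?thesis
    using assms unfolding is_orthonormal_basis_def orthonormal_on_def by auto
qed

definition diag_inner :: "(nat \<Rightarrow> real) \<Rightarrow> real^7 \<Rightarrow> real^7 \<Rightarrow> real" where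
  "diag_inner p x y = (\<Sum>m\<in>{1..7}. p m * x $ of_nat m * y $ of_nat m)"

lemma diag_inner_expand:
  "diag_inner p x y = p 1 * x$1*y$1 + p 2 * x$2*y$2 + p 3 * x$3*y$3 + p 4 * x$4*y$4
     + p 5 * x$5*y$5 + p 6 * x$6*y$6 + p 7 * x$0*y$0"
  unfolding diag_inner_def atLeastAtMost_1_7 by (simp add: numeral_7_eq_0)

lemma diag_inner_e: "l \<in> {1..7} \<Longrightarrow> diag_inner p x (e l) = p l * x $ of_nat l"
  unfolding diag_inner_def atLeastAtMost_1_7 by (auto simp: e_nth)

lemma inner_form_diag_inner:
  assumes p: "\<forall>k\<in>{1..7}. p k > 0"
  shows "inner_form (diag_inner p)"
  unfolding inner_form_def is_inner_product_def
proof (intro conjI allI impI)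
  show "bilinear (diag_inner p)"
    unfolding bilinear_def linear_iff by (simp add: diag_inner_expand algebra_simps)
  show "diag_inner p x y = diag_inner p y x" for x y
    by (simp add: diag_inner_expand algebra_simps)
  fix x :: "real^7"
  assume "x \<noteq> 0"
  then obtain k where k: "k \<in> {1..7}" "x $ of_nat k \<noteq> 0"
    by (metis vec_eq_iff zero_index UNIV_7_eq_image_of_nat UNIV_I imageE)
  have "0 < p k * x $ of_nat k * x $ of_nat k"
    using p k by (metis mult.assoc mult_pos_pos not_real_square_gt_zero)
  also have "\<dots> \<le> diag_inner p x x"
    unfolding diag_inner_def
  proof (rule member_le_sum[OF k(1)])
    show "0 \<le> p m * x $ of_nat m * x $ of_nat m" if "m \<in> {1..7} - {k}" for m
      using p that by (metis DiffD1 less_imp_le mult.assoc mult_nonneg_nonneg zero_le_square)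
  qed simp
  finally show "diag_inner p x x > 0" .
qed

definition diag_frame :: "(nat \<Rightarrow> real) \<Rightarrow> nat \<Rightarrow> real^7" where
  "diag_frame p k = (1 / sqrt (p k)) *\<^sub>R e k"

lemma diag_inner_diag_frame:
  assumes "\<forall>k\<in>{1..7}. p k > 0" and "l \<in> {1..7}"
  shows "diag_inner p u (diag_frame p l) = sqrt (p l) * u $ of_nat l"
proof -
  interpret inner_form "diag_inner p" using inner_form_diag_inner assms(1) .
  have "sqrt (p l) * sqrt (p l) = p l" "sqrt (p l) > 0"
    using assms by (simp_all add: less_imp_le)
  then show ?thesis
    unfolding diag_frame_def scaleR_right diag_inner_e[OF assms(2)] by (simp add: field_simps)
qed

lemma orthonormal_on_diag_frame:
  assumes p: "\<forall>k\<in>{1..7}. p k > 0"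
  shows "orthonormal_on (diag_inner p) {1..7} (diag_frame p)"
  unfolding orthonormal_on_def
proof (intro ballI)
  fix k l :: nat
  assume k: "k \<in> {1..7}" and l: "l \<in> {1..7}"
  have "sqrt (p k) * sqrt (p k) = p k" "sqrt (p k) > 0"
    using p k by (simp_all add: less_imp_le)
  then show "diag_inner p (diag_frame p k) (diag_frame p l) = (if k = l then 1 else 0)"
    unfolding diag_inner_diag_frame[OF p l] by (auto simp: diag_frame_def e_nth_of_nat[OF k l])
qed

lemma ricci_diag_inner_sum:
  assumes p: "\<forall>k\<in>{1..7}. p k > 0" and b: "is_orthonormal_basis (diag_inner p) b"
  shows "ricci_form_nil (diag_inner p) b (nbr t) x y =
    - (1/2) * (\<Sum>k\<in>{1..7}. \<Sum>l\<in>{1..7}.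
        p l / p k * nbr t x (e k) $ of_nat l * nbr t y (e k) $ of_nat l)
    + (1/4) * (\<Sum>k\<in>{1..7}. \<Sum>l\<in>{1..7}.
        1 / (p k * p l) * diag_inner p (nbr t (e k) (e l)) x * diag_inner p (nbr t (e k) (e l)) y)"
proof -
  interpret inner_form "diag_inner p" using inner_form_diag_inner[OF p] .
  have sqrt_p: "sqrt (p k) * sqrt (p k) = p k" "sqrt (p k) > 0" if "k \<in> {1..7}" for k
    using p that by (simp_all add: less_imp_le)
  have nbr_scaleR: "nbr t (a *\<^sub>R u) v = a *\<^sub>R nbr t u v" "nbr t u (a *\<^sub>R v) = a *\<^sub>R nbr t u v"
    for a u v
    by (simp_all add: bilinear_lmul[OF bilinear_nbr] bilinear_rmul[OF bilinear_nbr])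
  have "card {1..7::nat} = CARD(7)"
    by simp
  note ricci = ricci_form_nil_orthonormal[OF finite_atLeastAtMost this orthonormal_on_diag_frame[OF p]
      b bilinear_nbr]
  have first: "diag_inner p (nbr t x (diag_frame p k)) (diag_frame p l) *
      diag_inner p (nbr t y (diag_frame p k)) (diag_frame p l) =
      p l / p k * nbr t x (e k) $ of_nat l * nbr t y (e k) $ of_nat l"
    if k: "k \<in> {1..7}" and l: "l \<in> {1..7}" for x y k l
    unfolding diag_inner_diag_frame[OF p l] using sqrt_p[OF k] sqrt_p[OF l]
    by (simp add: diag_frame_def nbr_scaleR field_simps)
  have second: "diag_inner p (nbr t (diag_frame p k) (diag_frame p l)) x *
      diag_inner p (nbr t (diag_frame p k) (diag_frame p l)) y =
      1 / (p k * p l) * diag_inner p (nbr t (e k) (e l)) x * diag_inner p (nbr t (e k) (e l)) y"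
    if k: "k \<in> {1..7}" and l: "l \<in> {1..7}" for x y k l
    using sqrt_p[OF k] sqrt_p[OF l]
    by (simp add: diag_frame_def nbr_scaleR scaleR_left field_simps)
  show ?thesis
    by (subst ricci) (simp only: first second cong: sum.cong)
qed

lemma ricci_diag_inner:
  assumes p: "\<forall>k\<in>{1..7}. p k > 0" and b: "is_orthonormal_basis (diag_inner p) b"
  shows "ricci_form_nil (diag_inner p) b (nbr t) x y =
    (1/2) * (
      x$1*y$1 * p 1 * - (p 3/(p 1*p 2) + p 4/(p 1*p 3) + p 5/(p 1*p 4) + p 6/(p 1*p 5) + p 7/(p 1*p 6))
    + x$2*y$2 * p 2 * - (p 3/(p 1*p 2) + p 5/(p 2*p 3) + p 6/(p 2*p 4) + t^2*p 7/(p 2*p 5))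
    + x$3*y$3 * p 3 * (p 3/(p 1*p 2) - p 4/(p 1*p 3) - p 5/(p 2*p 3) - (1-t)^2*p 7/(p 3*p 4))
    + x$4*y$4 * p 4 * (p 4/(p 1*p 3) - p 5/(p 1*p 4) - p 6/(p 2*p 4) - (1-t)^2*p 7/(p 3*p 4))
    + x$5*y$5 * p 5 * (p 5/(p 1*p 4) + p 5/(p 2*p 3) - p 6/(p 1*p 5) - t^2*p 7/(p 2*p 5))
    + x$6*y$6 * p 6 * (p 6/(p 1*p 5) + p 6/(p 2*p 4) - p 7/(p 1*p 6))
    + x$0*y$0 * p 7 * (p 7/(p 1*p 6) + t^2*p 7/(p 2*p 5) + (1-t)^2*p 7/(p 3*p 4)))"
proof -
  have "p 1 > 0" "p 2 > 0" "p 3 > 0" "p 4 > 0" "p 5 > 0" "p 6 > 0" "p 7 > 0"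
    using p unfolding atLeastAtMost_1_7 by auto
  then show ?thesis
    unfolding ricci_diag_inner_sum[OF p b] atLeastAtMost_1_7
    by (simp add: nbr_nth e_nth diag_inner_expand numeral_7_eq_0, simp add: field_simps power2_eq_square)
qed

definition grading :: "real \<Rightarrow> real^7 \<Rightarrow> real^7" where
  "grading a x = (\<Sum>m\<in>{1..7}. (a * real m * x $ of_nat m) *\<^sub>R e m)"

lemma grading_nth:
  "grading a x $ 1 = a * x$1" "grading a x $ 2 = 2*a * x$2" "grading a x $ 3 = 3*a * x$3"
  "grading a x $ 4 = 4*a * x$4" "grading a x $ 5 = 5*a * x$5" "grading a x $ 6 = 6*a * x$6"
  "grading a x $ 0 = 7*a * x$0"
  unfolding grading_def atLeastAtMost_1_7 by (simp_all add: e_nth numeral_7_eq_0)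

lemma is_derivation_grading: "is_derivation (nbr t) (grading a)"
  unfolding is_derivation_def linear_iff
  by (simp add: vec7_eq_iff nbr_nth grading_nth algebra_simps)

lemma nilsoliton_diag_inner:
  assumes p: "\<forall>k\<in>{1..7}. p k > 0"
    and "- (p 3/(p 1*p 2) + p 4/(p 1*p 3) + p 5/(p 1*p 4) + p 6/(p 1*p 5) + p 7/(p 1*p 6)) = 2*c + 2*a"
    and "- (p 3/(p 1*p 2) + p 5/(p 2*p 3) + p 6/(p 2*p 4) + t^2*p 7/(p 2*p 5)) = 2*c + 4*a"
    and "p 3/(p 1*p 2) - p 4/(p 1*p 3) - p 5/(p 2*p 3) - (1-t)^2*p 7/(p 3*p 4) = 2*c + 6*a"
    and "p 4/(p 1*p 3) - p 5/(p 1*p 4) - p 6/(p 2*p 4) - (1-t)^2*p 7/(p 3*p 4) = 2*c + 8*a"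
    and "p 5/(p 1*p 4) + p 5/(p 2*p 3) - p 6/(p 1*p 5) - t^2*p 7/(p 2*p 5) = 2*c + 10*a"
    and "p 6/(p 1*p 5) + p 6/(p 2*p 4) - p 7/(p 1*p 6) = 2*c + 12*a"
    and "p 7/(p 1*p 6) + t^2*p 7/(p 2*p 5) + (1-t)^2*p 7/(p 3*p 4) = 2*c + 14*a"
  shows "is_nilsoliton (nbr t) (diag_inner p)"
  unfolding is_nilsoliton_def
proof (intro exI conjI allI)
  show b: "is_orthonormal_basis (diag_inner p) (\<lambda>i. diag_frame p (inv_into {1..7} of_nat i))"
    by (rule is_orthonormal_basis_of_orthonormal_on_1_7[OF orthonormal_on_diag_frame[OF p]])
  show "is_derivation (nbr t) (grading a)"
    by (rule is_derivation_grading)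
  fix x y :: "real^7"
  show "ricci_form_nil (diag_inner p) (\<lambda>i. diag_frame p (inv_into {1..7} of_nat i)) (nbr t) x y
      = diag_inner p (c *\<^sub>R x + grading a x) y"
    unfolding ricci_diag_inner[OF p b] assms(2-)
    by (simp add: diag_inner_expand grading_nth algebra_simps)
qed

text \<open>\<open>Q\<close> is a root in \<open>(2/3, 6/5)\<close> of \<open>m\<^sup>2 Q\<^sup>2 (3Q - 2) = (6 - 5Q)\<^sup>2\<close>, found by the intermediate
  value theorem; \<open>K\<close> is then determined by the first equation.\<close>
lemma soliton_parameters:
  fixes m :: real
  assumes "m > 0"
  obtains Q K where "0 < Q" "Q < 2" "K > 0" "Q + Q^2 / (2 - Q) + m * K = 3"
    "Q^2 * (2 - m * K) = (2 - Q) * K^2"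
proof -
  let ?f = "\<lambda>Q::real. m^2 * Q^2 * (3*Q - 2) - (6 - 5*Q)^2"
  have "?f (2/3) < 0" "?f (6/5) > 0"
    using assms by (simp_all add: power2_eq_square)
  moreover have "continuous_on {2/3..6/5} ?f"
    by (intro continuous_intros)
  ultimately obtain Q where Q: "2/3 \<le> Q" "Q \<le> 6/5" "?f Q = 0"
    using IVT'[of ?f "2/3" 0 "6/5"] by force
  moreover have "Q \<noteq> 2/3" "Q \<noteq> 6/5"
    using Q(3) \<open>?f (2/3) < 0\<close> \<open>?f (6/5) > 0\<close> by (metis less_irrefl)+
  ultimately have Q_range: "2/3 < Q" "Q < 6/5"
    by simp_all
  define K where "K = (6 - 5*Q) / ((2 - Q) * m)"
  have mK: "m * K = (6 - 5*Q) / (2 - Q)"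
    using assms Q_range by (simp add: K_def field_simps)
  show ?thesis
  proof
    show "0 < Q" "Q < 2" "K > 0"
      using assms Q_range by (simp_all add: K_def)
    have Q2: "2 - Q \<noteq> 0"
      using Q_range by simp
    then have "(Q + Q^2 / (2 - Q) + m * K) * (2 - Q) = Q * (2 - Q) + Q^2 + (6 - 5*Q)"
      unfolding mK by (simp add: distrib_right)
    then have "(Q + Q^2 / (2 - Q) + m * K) * (2 - Q) = 3 * (2 - Q)"
      by (simp add: algebra_simps power2_eq_square)
    then show "Q + Q^2 / (2 - Q) + m * K = 3"
      using Q2 by (metis mult_right_cancel)
    have cubic: "Q^2 * (3*Q - 2) = (6 - 5*Q)^2 / m^2"
      using Q(3) assms by (simp add: field_simps)
    have "2 - m * K = (3*Q - 2) / (2 - Q)"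
      using Q2 unfolding mK by (simp add: field_simps)
    then have "Q^2 * (2 - m * K) = (6 - 5*Q)^2 / m^2 / (2 - Q)"
      by (simp add: cubic[symmetric])
    also have "\<dots> = ((2 - Q) * K)^2 / (2 - Q)"
      using Q2 assms by (simp add: K_def power_divide power_mult_distrib)
    also have "\<dots> = (2 - Q) * K^2"
      using Q2 by (simp add: power2_eq_square)
    finally show "Q^2 * (2 - m * K) = (2 - Q) * K^2" .
  qed
qed

text \<open>The weights \<open>|e\<^sub>k|\<^sup>2\<close> of the soliton metric, where \<open>r = |t|\<close>, \<open>s = |1 - t|\<close> and \<open>Q, K\<close>
  come from \<open>soliton_parameters\<close>.\<close>
definition soliton_weights :: "real \<Rightarrow> real \<Rightarrow> real \<Rightarrow> real \<Rightarrow> nat \<Rightarrow> real" where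
  "soliton_weights r s Q K k =
    (let X = (2 - Q) * r * K / Q in
     if k = 1 then 1 else if k = 2 then X else if k = 3 then s * K * X
     else if k = 4 then (2 - Q) * s * K * X else if k = 5 then r * K * (2 - Q) * s * K * X
     else if k = 6 then Q * r * K * (2 - Q) * s * K * X
     else (2 - (r + s) * K) * Q * r * K * (2 - Q) * s * K * X)"

lemma soliton_weights:
  assumes r: "r > 0" and s: "s > 0" and Q: "0 < Q" "Q < 2" and K: "K > 0"
    and key: "Q^2 * (2 - (r + s) * K) = (2 - Q) * K^2"
  defines "p \<equiv> soliton_weights r s Q K"
  shows "\<forall>k\<in>{1..7}. p k > 0"
    and "p 3/(p 1*p 2) = s*K" "p 4/(p 1*p 3) = 2 - Q" "p 5/(p 1*p 4) = r*K" "p 6/(p 1*p 5) = Q"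
      "p 7/(p 1*p 6) = 2 - (r + s)*K" "p 5/(p 2*p 3) = Q" "p 6/(p 2*p 4) = Q^2/(2 - Q)"
      "r^2*p 7/(p 2*p 5) = r*K" "s^2*p 7/(p 3*p 4) = s*K"
proof -
  define X where "X = (2 - Q) * r * K / Q"
  have p_def': "p = (\<lambda>k. if k = 1 then 1 else if k = 2 then X else if k = 3 then s * K * X
     else if k = 4 then (2 - Q) * s * K * X else if k = 5 then r * K * (2 - Q) * s * K * X
     else if k = 6 then Q * r * K * (2 - Q) * s * K * X
     else (2 - (r + s) * K) * Q * r * K * (2 - Q) * s * K * X)"
    by (simp add: p_def soliton_weights_def X_def Let_def fun_eq_iff)
  have top: "2 - (r + s) * K > 0"
    using key Q K by (metis diff_gt_0_iff_gt mult_pos_pos zero_less_power zero_less_mult_pos)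
  have X: "X > 0"
    using Q r K by (simp add: X_def)
  show "\<forall>k\<in>{1..7}. p k > 0"
    unfolding atLeastAtMost_1_7 using X Q r s K top by (auto simp: p_def')
  have pos: "X \<noteq> 0" "Q \<noteq> 0" "2 - Q \<noteq> 0" "r \<noteq> 0" "s \<noteq> 0" "K \<noteq> 0" "2 - (r + s) * K \<noteq> 0"
    using X Q r s K top by auto
  show "p 3/(p 1*p 2) = s*K" "p 4/(p 1*p 3) = 2 - Q" "p 5/(p 1*p 4) = r*K" "p 6/(p 1*p 5) = Q"
    "p 7/(p 1*p 6) = 2 - (r + s)*K"
    using pos by (simp_all add: p_def')
  have rK: "r * K = X * Q / (2 - Q)"
    using pos by (simp add: X_def field_simps)
  have "p 5/(p 2*p 3) = (r * K) * (2 - Q) / X" "p 6/(p 2*p 4) = Q * (r * K) / X"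
    using pos by (simp_all add: p_def' field_simps)
  then show "p 5/(p 2*p 3) = Q" "p 6/(p 2*p 4) = Q^2/(2 - Q)"
    unfolding rK using pos by (simp_all add: power2_eq_square)
  have "(2 - (r + s) * K) * Q / X = Q^2 * (2 - (r + s) * K) / ((2 - Q) * r * K)"
    using pos by (simp add: X_def power2_eq_square)
  also have "\<dots> = K / r"
    unfolding key using pos by (simp add: power2_eq_square)
  finally have top_ratio: "(2 - (r + s) * K) * Q / X = K / r" .
  have "r^2*p 7/(p 2*p 5) = r^2 * ((2 - (r + s) * K) * Q / X)"
    "s^2*p 7/(p 3*p 4) = s * r * ((2 - (r + s) * K) * Q / X)"
    using pos by (simp_all add: p_def' field_simps power2_eq_square)
  then show "r^2*p 7/(p 2*p 5) = r*K" "s^2*p 7/(p 3*p 4) = s*K"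
    unfolding top_ratio using pos by (simp_all add: power2_eq_square)
qed

lemma einstein_nilradical_nbr:
  assumes "t \<noteq> 0" "t \<noteq> 1"
  shows "einstein_nilradical (nbr t)"
proof -
  define r s where "r = \<bar>t\<bar>" and "s = \<bar>1 - t\<bar>"
  have r: "r > 0" and s: "s > 0" and t2: "t^2 = r^2" "(1 - t)^2 = s^2"
    using assms by (simp_all add: r_def s_def)
  obtain Q K where Q: "0 < Q" "Q < 2" and K: "K > 0"
    and S: "Q + Q^2 / (2 - Q) + (r + s) * K = 3"
    and key: "Q^2 * (2 - (r + s) * K) = (2 - Q) * K^2"
    using soliton_parameters[of "r + s"] r s by auto
  define p where "p = soliton_weights r s Q K"
  note weights = soliton_weights[OF r s Q K key, folded p_def]
  have "is_nilsoliton (nbr t) (diag_inner p)"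
    by (rule nilsoliton_diag_inner[where c = "-5/2" and a = "1/2", OF weights(1)])
      (unfold t2 weights(2-), use S in \<open>simp_all add: algebra_simps\<close>)
  then show ?thesis
    unfolding einstein_nilradical_def using inner_form_diag_inner[OF weights(1)]
    by (auto simp: inner_form_def)
qed

section \<open>Triangular frames: no nilsoliton for \<open>t \<in> {0, 1}\<close>\<close>

lemma nbr_basis:
  "nbr t (e 1) (e 2) = e 3" "nbr t (e 1) (e 3) = e 4" "nbr t (e 1) (e 4) = e 5"
  "nbr t (e 1) (e 5) = e 6" "nbr t (e 1) (e 6) = e 7" "nbr t (e 1) (e 7) = 0"
  "nbr t (e 2) (e 3) = e 5" "nbr t (e 2) (e 4) = e 6" "nbr t (e 2) (e 5) = t *\<^sub>R e 7"
  "nbr t (e 2) (e 6) = 0" "nbr t (e 3) (e 4) = (1 - t) *\<^sub>R e 7" "nbr t (e 3) (e 5) = 0"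
  by (simp_all add: vec7_eq_iff nbr_nth e_nth)

text \<open>For \<open>t \<in> {0, 1}\<close> one of the brackets \<open>[e\<^sub>2, e\<^sub>5]\<close>, \<open>[e\<^sub>3, e\<^sub>4]\<close> vanishes, and
  this forces every derivation to be triangular with diagonal \<open>(\<alpha>, 2\<alpha>, \<dots>, 7\<alpha>)\<close>.\<close>
lemma derivation_triangular:
  assumes "is_derivation (nbr t) D" and "t = 0 \<or> t = 1" and "i \<in> {1..7}" and "j \<in> {1..7}"
  shows "i < j \<Longrightarrow> D (e j) $ of_nat i = 0" and "D (e j) $ of_nat j = real j * D (e 1) $ 1"
proof -
  have lin: "linear D" and leibniz: "\<And>x y. D (nbr t x y) = nbr t (D x) y + nbr t x (D y)"
    using assms(1) unfolding is_derivation_def by auto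
  note D_simps = linear_0[OF lin] linear_cmul[OF lin]
  note eqs = leibniz[of "e 1" "e 2"] leibniz[of "e 1" "e 3"] leibniz[of "e 1" "e 4"]
    leibniz[of "e 1" "e 5"] leibniz[of "e 1" "e 6"] leibniz[of "e 1" "e 7"]
    leibniz[of "e 2" "e 3"] leibniz[of "e 2" "e 4"] leibniz[of "e 2" "e 5"]
    leibniz[of "e 2" "e 6"] leibniz[of "e 3" "e 4"] leibniz[of "e 3" "e 5"]
  from assms(2) have
    "D (e 2) $ 1 = 0 \<and> D (e 3) $ 1 = 0 \<and> D (e 3) $ 2 = 0 \<and>
     D (e 4) $ 1 = 0 \<and> D (e 4) $ 2 = 0 \<and> D (e 4) $ 3 = 0 \<and>
     D (e 5) $ 1 = 0 \<and> D (e 5) $ 2 = 0 \<and> D (e 5) $ 3 = 0 \<and> D (e 5) $ 4 = 0 \<and>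
     D (e 6) $ 1 = 0 \<and> D (e 6) $ 2 = 0 \<and> D (e 6) $ 3 = 0 \<and> D (e 6) $ 4 = 0 \<and> D (e 6) $ 5 = 0 \<and>
     D (e 7) $ 1 = 0 \<and> D (e 7) $ 2 = 0 \<and> D (e 7) $ 3 = 0 \<and> D (e 7) $ 4 = 0 \<and> D (e 7) $ 5 = 0 \<and>
     D (e 7) $ 6 = 0 \<and>
     D (e 2) $ 2 = 2 * D (e 1) $ 1 \<and> D (e 3) $ 3 = 3 * D (e 1) $ 1 \<and> D (e 4) $ 4 = 4 * D (e 1) $ 1 \<and>
     D (e 5) $ 5 = 5 * D (e 1) $ 1 \<and> D (e 6) $ 6 = 6 * D (e 1) $ 1 \<and> D (e 7) $ 0 = 7 * D (e 1) $ 1"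
    using eqs[unfolded nbr_basis D_simps vec7_eq_iff] by (auto simp: nbr_nth e_nth)
  then show "i < j \<Longrightarrow> D (e j) $ of_nat i = 0" and "D (e j) $ of_nat j = real j * D (e 1) $ 1"
    using assms(3,4) unfolding atLeastAtMost_1_7 by (auto simp: numeral_7_eq_0)
qed

text \<open>The state of Gram--Schmidt applied to \<open>e\<^sub>7, e\<^sub>6, \<dots>\<close> after reaching \<open>e\<^sub>n\<close>.\<close>
definition triangular_frame :: "(real^7 \<Rightarrow> real^7 \<Rightarrow> real) \<Rightarrow> nat \<Rightarrow> (nat \<Rightarrow> real^7) \<Rightarrow> bool" where
  "triangular_frame ip n g \<longleftrightarrow>
     orthonormal_on ip {n..7} g \<and>
     (\<forall>a\<in>{n..7}. \<forall>i\<in>{1..7}. i < a \<longrightarrow> g a $ of_nat i = 0) \<and>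
     (\<forall>a\<in>{n..7}. g a $ of_nat a \<noteq> 0) \<and>
     (\<forall>a\<in>{n..7}. e a = (\<Sum>b\<in>{a..7}. ip (e a) (g b) *\<^sub>R g b))"

lemma triangular_frame_residual:
  assumes "inner_form ip" and n: "n \<in> {1..7}" and g: "triangular_frame ip (Suc n) g"
  defines "h \<equiv> e n - (\<Sum>a\<in>{Suc n..7}. ip (e n) (g a) *\<^sub>R g a)"
  shows "\<And>i. i \<in> {1..7} \<Longrightarrow> i \<le> n \<Longrightarrow> h $ of_nat i = (if i = n then 1 else 0)"
    and "\<And>l. l \<in> {Suc n..7} \<Longrightarrow> ip h (g l) = 0"
    and "ip (e n) h = ip h h"
proof -
  interpret inner_form ip by fact
  have orth: "\<And>a b. a \<in> {Suc n..7} \<Longrightarrow> b \<in> {Suc n..7} \<Longrightarrow> ip (g a) (g b) = (if a = b then 1 else 0)"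
    and zero: "\<And>a i. a \<in> {Suc n..7} \<Longrightarrow> i \<in> {1..7} \<Longrightarrow> i < a \<Longrightarrow> g a $ of_nat i = 0"
    using g unfolding triangular_frame_def orthonormal_on_def by auto
  show "h $ of_nat i = (if i = n then 1 else 0)" if "i \<in> {1..7}" "i \<le> n" for i
  proof -
    have "(\<Sum>a\<in>{Suc n..7}. ip (e n) (g a) * g a $ of_nat i) = 0"
      using zero that by (intro sum.neutral) auto
    then show ?thesis
      using e_nth_of_nat[OF n that(1)] by (auto simp: h_def)
  qed
  show h_orth: "ip h (g l) = 0" if "l \<in> {Suc n..7}" for l
  proof -
    have "(\<Sum>a\<in>{Suc n..7}. ip (e n) (g a) * ip (g a) (g l))
        = (\<Sum>a\<in>{Suc n..7}. if a = l then ip (e n) (g l) else 0)"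
      using orth that by (intro sum.cong) auto
    also have "\<dots> = ip (e n) (g l)"
      using that by simp
    finally show ?thesis
      by (simp add: h_def diff_left sum_left scaleR_left)
  qed
  have "ip (e n) h = ip (h + (\<Sum>a\<in>{Suc n..7}. ip (e n) (g a) *\<^sub>R g a)) h"
    by (simp add: h_def)
  also have "\<dots> = ip h h + (\<Sum>a\<in>{Suc n..7}. ip (e n) (g a) * ip (g a) h)"
    by (simp only: add_left sum_left scaleR_left)
  also have "(\<Sum>a\<in>{Suc n..7}. ip (e n) (g a) * ip (g a) h) = 0"
    using h_orth by (simp add: commute[of "g _"])
  finally show "ip (e n) h = ip h h"
    by simp
qed

lemma triangular_frame_step:
  assumes "inner_form ip" and n: "1 \<le> n" "n \<le> 7" and g: "triangular_frame ip (Suc n) g"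
  shows "\<exists>g'. triangular_frame ip n g'"
proof -
  interpret inner_form ip by fact
  have n17: "n \<in> {1..7}"
    using n by simp
  define h where "h = e n - (\<Sum>a\<in>{Suc n..7}. ip (e n) (g a) *\<^sub>R g a)"
  note residual = triangular_frame_residual[OF assms(1) n17 g, folded h_def]
  have orth: "\<And>a b. a \<in> {Suc n..7} \<Longrightarrow> b \<in> {Suc n..7} \<Longrightarrow> ip (g a) (g b) = (if a = b then 1 else 0)"
    and zero: "\<And>a i. a \<in> {Suc n..7} \<Longrightarrow> i \<in> {1..7} \<Longrightarrow> i < a \<Longrightarrow> g a $ of_nat i = 0"
    and diag: "\<And>a. a \<in> {Suc n..7} \<Longrightarrow> g a $ of_nat a \<noteq> 0"
    and expansion: "\<And>a. a \<in> {Suc n..7} \<Longrightarrow> e a = (\<Sum>b\<in>{a..7}. ip (e a) (g b) *\<^sub>R g b)"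
    using g unfolding triangular_frame_def orthonormal_on_def by auto
  have hh: "ip h h > 0"
    using residual(1)[OF n17] by (intro positive) auto
  define q where "q = sqrt (ip h h)"
  have q: "q > 0" "q * q = ip h h"
    using hh by (simp_all add: q_def)
  define g' where "g' = g(n := (1/q) *\<^sub>R h)"
  have g'_other: "(\<Sum>b\<in>{a..7}. ip v (g' b) *\<^sub>R g' b) = (\<Sum>b\<in>{a..7}. ip v (g b) *\<^sub>R g b)"
    if "Suc n \<le> a" for a v
    using that by (intro sum.cong) (simp_all add: g'_def)
  have split: "{n..7} = insert n {Suc n..7}"
    using n by auto
  have "triangular_frame ip n g'"
    unfolding triangular_frame_def orthonormal_on_def split
  proof (intro conjI ballI impI)
    fix a b assume "a \<in> insert n {Suc n..7}" "b \<in> insert n {Suc n..7}"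
    then show "ip (g' a) (g' b) = (if a = b then 1 else 0)"
      using q hh orth residual(2)
      by (auto simp: g'_def scaleR_left scaleR_right commute[of "g _" h] field_simps)
  next
    fix a i assume "a \<in> insert n {Suc n..7}" "i \<in> {1..7}" "i < a"
    then show "g' a $ of_nat i = 0"
      using residual(1) zero by (auto simp: g'_def)
  next
    fix a assume "a \<in> insert n {Suc n..7}"
    then show "g' a $ of_nat a \<noteq> 0"
      using residual(1)[OF n17] q diag by (auto simp: g'_def)
  next
    fix a assume "a \<in> insert n {Suc n..7}"
    moreover have "ip (e n) (g' n) *\<^sub>R g' n = h"
      using q hh residual(3) by (simp add: g'_def scaleR_right field_simps)
    ultimately show "e a = (\<Sum>b\<in>{a..7}. ip (e a) (g' b) *\<^sub>R g' b)"
      using expansion g'_other[of "Suc n" "e n"] g'_other[of a "e a"] by (auto simp: split h_def)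
  qed
  then show ?thesis by blast
qed

lemma triangular_frame_exists:
  assumes "inner_form ip"
  obtains g where "triangular_frame ip 1 g"
proof -
  have "\<exists>g. triangular_frame ip 1 g"
  proof (rule inc_induct[of 1 8 "\<lambda>n. \<exists>g. triangular_frame ip n g"])
    show "\<exists>g. triangular_frame ip 8 g"
      by (auto simp: triangular_frame_def orthonormal_on_def)
    show "\<exists>g. triangular_frame ip n g" if "1 \<le> n" "n < 8" "\<exists>g. triangular_frame ip (Suc n) g" for n
      using that triangular_frame_step[OF assms] by auto
  qed simp
  then show ?thesis using that by blast
qed

locale triangular_soliton = inner_form ip for ip :: "real^7 \<Rightarrow> real^7 \<Rightarrow> real" +
  fixes t :: real and b :: "7 \<Rightarrow> real^7" and c \<alpha> :: real and D :: "real^7 \<Rightarrow> real^7"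
    and g :: "nat \<Rightarrow> real^7"
  assumes basis: "is_orthonormal_basis ip b"
    and derivation: "is_derivation (nbr t) D"
    and ricci: "\<And>x y. ricci_form_nil ip b (nbr t) x y = ip (c *\<^sub>R x + D x) y"
    and frame: "triangular_frame ip 1 g"
    and D_lower: "\<And>i j. i \<in> {1..7} \<Longrightarrow> j \<in> {1..7} \<Longrightarrow> i < j \<Longrightarrow> D (e j) $ of_nat i = 0"
    and D_diag: "\<And>j. j \<in> {1..7} \<Longrightarrow> D (e j) $ of_nat j = real j * \<alpha>"
begin

lemma frame_orthonormal: "orthonormal_on ip {1..7} g"
  and frame_lower: "a \<in> {1..7} \<Longrightarrow> i \<in> {1..7} \<Longrightarrow> i < a \<Longrightarrow> g a $ of_nat i = 0"
  and frame_diag: "a \<in> {1..7} \<Longrightarrow> g a $ of_nat a \<noteq> 0"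
  and e_expansion: "a \<in> {1..7} \<Longrightarrow> e a = (\<Sum>b\<in>{a..7}. ip (e a) (g b) *\<^sub>R g b)"
  using frame unfolding triangular_frame_def by auto

lemma frame_expansion: "v = (\<Sum>l\<in>{1..7}. ip v (g l) *\<^sub>R g l)"
  by (rule orthonormal_expansion[OF finite_atLeastAtMost _ frame_orthonormal]) simp

lemma ricci_frame:
  "ricci_form_nil ip b (nbr t) x y =
     - (1/2) * (\<Sum>k\<in>{1..7}. \<Sum>l\<in>{1..7}. ip (nbr t x (g k)) (g l) * ip (nbr t y (g k)) (g l))
     + (1/4) * (\<Sum>k\<in>{1..7}. \<Sum>l\<in>{1..7}. ip (nbr t (g k) (g l)) x * ip (nbr t (g k) (g l)) y)"
  by (rule ricci_form_nil_orthonormal[OF finite_atLeastAtMost _ frame_orthonormal basis bilinear_nbr])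
    simp

lemma inner_e_frame:
  assumes "l \<in> {1..7}" "m \<in> {1..7}" "l < m"
  shows "ip (e m) (g l) = 0"
proof -
  have "ip (e m) (g l) = (\<Sum>a\<in>{m..7}. ip (e m) (g a) * ip (g a) (g l))"
    by (subst e_expansion[OF assms(2)]) (simp add: sum_left scaleR_left)
  also have "\<dots> = 0"
    using frame_orthonormal assms by (intro sum.neutral) (auto simp: orthonormal_on_def)
  finally show ?thesis .
qed

lemma inner_frame_eq_0:
  assumes v: "\<forall>i\<in>{1..7}. i < k \<longrightarrow> v $ of_nat i = 0" and l: "l \<in> {1..7}" "l < k"
  shows "ip v (g l) = 0"
proof -
  have "ip v (g l) = (\<Sum>j\<in>{1..7}. v $ of_nat j * ip (e j) (g l))"
    by (subst vec7_expansion[of v]) (simp add: sum_left scaleR_left)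
  also have "\<dots> = 0"
    using v l inner_e_frame[OF l(1)]
    by (intro sum.neutral ballI) (metis less_trans mult_eq_0_iff not_less_iff_gr_or_eq)
  finally show ?thesis .
qed

lemma D_linear: "linear D"
  using derivation by (simp add: is_derivation_def)

lemma D_lower_vector:
  assumes v: "\<forall>i\<in>{1..7}. i < k \<longrightarrow> v $ of_nat i = 0" and k: "k \<in> {1..7}"
  shows "\<forall>i\<in>{1..7}. i < k \<longrightarrow> D v $ of_nat i = 0"
    and "D v $ of_nat k = real k * \<alpha> * v $ of_nat k"
proof -
  have Dv: "D v $ q = (\<Sum>j\<in>{1..7}. v $ of_nat j * D (e j) $ q)" for q
    by (subst vec7_expansion[of v]) (simp add: linear_sum[OF D_linear] linear_cmul[OF D_linear])
  have coeff: "v $ of_nat j * D (e j) $ of_nat i = (if j = i then real i * \<alpha> * v $ of_nat i else 0)"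
    if "i \<in> {1..7}" "i \<le> k" "j \<in> {1..7}" for i j
    using v that D_lower[of i j] D_diag[of j] by (cases j i rule: linorder_cases) auto
  have Dv_nth: "D v $ of_nat i = real i * \<alpha> * v $ of_nat i" if "i \<in> {1..7}" "i \<le> k" for i
  proof -
    have "D v $ of_nat i = (\<Sum>j\<in>{1..7}. if j = i then real i * \<alpha> * v $ of_nat i else 0)"
      unfolding Dv by (rule sum.cong[OF refl], rule coeff) (use that in auto)
    then show ?thesis
      using that(1) by simp
  qed
  show "\<forall>i\<in>{1..7}. i < k \<longrightarrow> D v $ of_nat i = 0"
    using v Dv_nth by simp
  show "D v $ of_nat k = real k * \<alpha> * v $ of_nat k"
    using k Dv_nth by simp
qed

lemma D_selfadjoint: "ip (D x) y = ip (D y) x"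
proof -
  have "ip (c *\<^sub>R x + D x) y = ip (c *\<^sub>R y + D y) x"
    unfolding ricci[symmetric] by (simp add: ricci_form_nil_def mult.commute)
  then show ?thesis
    by (simp add: add_left scaleR_left commute[of x y])
qed

lemma D_frame:
  assumes k: "k \<in> {1..7}"
  shows "D (g k) = (real k * \<alpha>) *\<^sub>R g k"
proof -
  note D_gk = D_lower_vector[OF _ k, of "g k"]
  have off_diag: "ip (D (g k)) (g l) = 0" if l: "l \<in> {1..7}" "l \<noteq> k" for l
  proof (cases "l < k")
    case True
    then show ?thesis
      using inner_frame_eq_0 D_gk frame_lower k l by blast
  next
    case False
    then have "ip (D (g l)) (g k) = 0"
      using inner_frame_eq_0 D_lower_vector[OF _ l(1), of "g l"] frame_lower k l by auto
    then show ?thesis by (simp add: D_selfadjoint)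
  qed
  have "D (g k) = (\<Sum>l\<in>{1..7}. ip (D (g k)) (g l) *\<^sub>R g l)"
    by (rule frame_expansion)
  also have "\<dots> = (\<Sum>l\<in>{1..7}. if l = k then ip (D (g k)) (g k) *\<^sub>R g k else 0)"
    by (rule sum.cong[OF refl]) (simp add: off_diag)
  also have "\<dots> = ip (D (g k)) (g k) *\<^sub>R g k"
    using k by simp
  finally have eigen: "D (g k) = ip (D (g k)) (g k) *\<^sub>R g k" .
  then have "ip (D (g k)) (g k) * g k $ of_nat k = real k * \<alpha> * g k $ of_nat k"
    using D_gk(2) frame_lower k by (metis vector_scaleR_component real_scaleR_def)
  then have "ip (D (g k)) (g k) = real k * \<alpha>"
    using frame_diag[OF k] by simp
  then show ?thesis
    using eigen by simp
qed


lemma ricci_frame_diag: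
  assumes "k \<in> {1..7}"
  shows "ricci_form_nil ip b (nbr t) (g k) (g k) = c + real k * \<alpha>"
proof -
  have "ip (g k) (g k) = 1"
    using frame_orthonormal assms by (simp add: orthonormal_on_def)
  then show ?thesis
    by (simp add: ricci D_frame[OF assms] add_left scaleR_left algebra_simps)
qed

text \<open>\<open>[g\<^sub>i, g\<^sub>j]\<close> is an eigenvector of \<open>D\<close> with eigenvalue \<open>(i + j) \<alpha>\<close>.\<close>
lemma bracket_frame_graded:
  assumes "\<alpha> \<noteq> 0" and i: "i \<in> {1..7}" and j: "j \<in> {1..7}" and l: "l \<in> {1..7}" "l \<noteq> i + j"
  shows "ip (nbr t (g i) (g j)) (g l) = 0"
proof -
  let ?w = "nbr t (g i) (g j)"
  have "D ?w = nbr t (D (g i)) (g j) + nbr t (g i) (D (g j))"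
    using derivation by (simp add: is_derivation_def)
  also have "\<dots> = (real (i + j) * \<alpha>) *\<^sub>R ?w"
    by (simp add: D_frame[OF i] D_frame[OF j] bilinear_lmul[OF bilinear_nbr] bilinear_rmul[OF bilinear_nbr]
        algebra_simps)
  finally have "real (i + j) * \<alpha> * ip ?w (g l) = ip (D ?w) (g l)"
    by (simp add: scaleR_left)
  also have "\<dots> = ip (D (g l)) ?w"
    by (rule D_selfadjoint)
  also have "\<dots> = real l * \<alpha> * ip ?w (g l)"
    by (simp add: D_frame[OF l(1)] scaleR_left commute[of "g l"])
  finally show ?thesis
    using assms(1) l(2) by simp
qed

lemma nbr_frame_7: "nbr t (g 7) x = 0"
  using frame_lower[of 7 1] frame_lower[of 7 2] frame_lower[of 7 3] frame_lower[of 7 4]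
    frame_lower[of 7 5] frame_lower[of 7 6]
  by (simp add: vec7_eq_iff nbr_nth)

lemma nbr_frame_1_2: "nbr t (g 1) (g 2) \<noteq> 0"
proof
  assume "nbr t (g 1) (g 2) = 0"
  then have "g 1 $ 1 * g 2 $ 2 = 0"
    using frame_lower[of 2 1] nbr_nth(3)[of t "g 1" "g 2"] by simp
  then show False
    using frame_diag[of 1] frame_diag[of 2] by simp
qed

text \<open>With \<open>D = 0\<close> the soliton would be Einstein: but the trace of \<open>Ric\<close> is negative while
  \<open>Ric(g\<^sub>7, g\<^sub>7) \<ge> 0\<close> for the central vector \<open>g\<^sub>7\<close>.\<close>
lemma alpha_nonzero: "\<alpha> \<noteq> 0"
proof
  assume "\<alpha> = 0"
  let ?A = "\<lambda>i j l. ip (nbr t (g i) (g j)) (g l)"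
  have diag: "ricci_form_nil ip b (nbr t) (g k) (g k) = c" if "k \<in> {1..7}" for k
    using ricci_frame_diag[OF that] \<open>\<alpha> = 0\<close> by simp
  have "c = (1/4) * (\<Sum>k\<in>{1..7}. \<Sum>l\<in>{1..7}. (?A k l 7)^2)"
    using diag[of 7] unfolding ricci_frame by (simp add: nbr_frame_7 zero_left power2_eq_square)
  moreover have "(\<Sum>k\<in>{1..7}. \<Sum>l\<in>{1..7}. (?A k l 7)^2) \<ge> 0"
    by (intro sum_nonneg) simp
  ultimately have "c \<ge> 0"
    by linarith
  define T where "T = (\<Sum>i\<in>{1..7}. \<Sum>j\<in>{1..7}. \<Sum>k\<in>{1..7}. (?A i j k)^2)"
  have "7 * c = (\<Sum>k\<in>{1..7::nat}. c)"
    by simp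
  also have "\<dots> = (\<Sum>k\<in>{1..7}. ricci_form_nil ip b (nbr t) (g k) (g k))"
    by (simp add: diag)
  also have "\<dots> = - (1/2) * T + (1/4) * (\<Sum>k\<in>{1..7}. \<Sum>i\<in>{1..7}. \<Sum>j\<in>{1..7}. (?A i j k)^2)"
    unfolding ricci_frame T_def by (simp add: sum.distrib sum_distrib_left power2_eq_square)
  also have "(\<Sum>k\<in>{1..7}. \<Sum>i\<in>{1..7}. \<Sum>j\<in>{1..7}. (?A i j k)^2) = T"
    unfolding T_def by (subst sum.swap) (rule sum.cong[OF refl], rule sum.swap)
  finally have "7 * c = - (1/4) * T"
    by simp
  moreover have "T > 0"
  proof -
    have "\<exists>l\<in>{1..7}. ?A 1 2 l \<noteq> 0"
    proof (rule ccontr)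
      assume "\<not> (\<exists>l\<in>{1..7}. ?A 1 2 l \<noteq> 0)"
      then have "nbr t (g 1) (g 2) = 0"
        using frame_expansion[of "nbr t (g 1) (g 2)"] by simp
      then show False
        using nbr_frame_1_2 by simp
    qed
    then obtain l where l: "l \<in> {1..7}" "?A 1 2 l \<noteq> 0" ..
    have "0 < (?A 1 2 l)^2"
      using l by simp
    also have "\<dots> \<le> (\<Sum>k\<in>{1..7}. (?A 1 2 k)^2)"
      by (rule member_le_sum) (use l in auto)
    also have "\<dots> \<le> (\<Sum>j\<in>{1..7}. \<Sum>k\<in>{1..7}. (?A 1 j k)^2)"
      by (rule member_le_sum[where f = "\<lambda>j. \<Sum>k\<in>{1..7}. (?A 1 j k)^2"]) (auto intro: sum_nonneg)
    also have "\<dots> \<le> T"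
      unfolding T_def
      by (rule member_le_sum[where f = "\<lambda>i. \<Sum>j\<in>{1..7}. \<Sum>k\<in>{1..7}. (?A i j k)^2"])
        (auto intro!: sum_nonneg)
    finally show ?thesis .
  qed
  ultimately show False
    using \<open>c \<ge> 0\<close> by simp
qed


lemma nbr_frame_eq_0:
  assumes "\<alpha> \<noteq> 0" "i \<in> {1..7}" "j \<in> {1..7}" "ip (nbr t (g i) (g j)) (g k) = 0" "k = i + j"
  shows "nbr t (g i) (g j) = 0"
proof -
  have "ip (nbr t (g i) (g j)) (g l) = 0" if "l \<in> {1..7}" for l
    using bracket_frame_graded[OF assms(1-3) that] assms(4,5) by (cases "l = k") auto
  then show ?thesis
    using frame_expansion[of "nbr t (g i) (g j)"] by simp
qed

text \<open>In both identities the coefficients sum to zero and so do the coefficients weighted by \<open>k\<close>,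
  so the left-hand side vanishes when \<open>Ric(g\<^sub>k, g\<^sub>k) = c + k \<alpha>\<close>.\<close>
lemma ricci_frame_identities:
  assumes "\<alpha> \<noteq> 0"
  defines "R \<equiv> \<lambda>k. ricci_form_nil ip b (nbr t) (g k) (g k)"
  shows "- 9 * R 1 + 10 * R 2 + R 3 - 8 * R 4 + 11 * R 5 + 2 * R 6 - 7 * R 7
      = 14 * (ip (nbr t (g 1) (g 4)) (g 5))^2 - 14 * (ip (nbr t (g 2) (g 5)) (g 7))^2"
    and "- 5 * R 1 - 10 * R 2 + 13 * R 3 + 8 * R 4 + 3 * R 5 - 2 * R 6 - 7 * R 7
      = 14 * (ip (nbr t (g 1) (g 2)) (g 3))^2 - 14 * (ip (nbr t (g 3) (g 4)) (g 7))^2"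
proof -
  have antisym: "j < i \<Longrightarrow> nbr t (g i) (g j) = - nbr t (g j) (g i)" for i j
    by (rule nbr_antisym)
  note graded = bracket_frame_graded[OF assms(1)]
  show "- 9 * R 1 + 10 * R 2 + R 3 - 8 * R 4 + 11 * R 5 + 2 * R 6 - 7 * R 7
      = 14 * (ip (nbr t (g 1) (g 4)) (g 5))^2 - 14 * (ip (nbr t (g 2) (g 5)) (g 7))^2"
    unfolding R_def ricci_frame atLeastAtMost_1_7
    by (simp add: graded antisym nbr_self minus_left zero_left power2_eq_square algebra_simps)
  show "- 5 * R 1 - 10 * R 2 + 13 * R 3 + 8 * R 4 + 3 * R 5 - 2 * R 6 - 7 * R 7
      = 14 * (ip (nbr t (g 1) (g 2)) (g 3))^2 - 14 * (ip (nbr t (g 3) (g 4)) (g 7))^2"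
    unfolding R_def ricci_frame atLeastAtMost_1_7
    by (simp add: graded antisym nbr_self minus_left zero_left power2_eq_square algebra_simps)
qed

lemma parameter_not_0_1: "t \<notin> {0, 1}"
proof
  assume t: "t \<in> {0, 1}"
  have \<alpha>: "\<alpha> \<noteq> 0"
    by (rule alpha_nonzero)
  note R = ricci_frame_diag[of 1] ricci_frame_diag[of 2] ricci_frame_diag[of 3] ricci_frame_diag[of 4]
    ricci_frame_diag[of 5] ricci_frame_diag[of 6] ricci_frame_diag[of 7]
  note lower = frame_lower[of 2 1] frame_lower[of 3 1] frame_lower[of 3 2] frame_lower[of 4 1]
    frame_lower[of 4 2] frame_lower[of 4 3] frame_lower[of 5 1] frame_lower[of 5 2]
    frame_lower[of 5 3] frame_lower[of 5 4]
  from t consider "t = 0" | "t = 1" by blast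
  then show False
  proof cases
    case 1
    then have "nbr t (g 2) (g 5) = 0"
      using lower by (simp add: vec7_eq_iff nbr_nth)
    then have "ip (nbr t (g 1) (g 4)) (g 5) = 0"
      using ricci_frame_identities(1)[OF \<alpha>] R by (simp add: zero_left algebra_simps)
    from nbr_frame_eq_0[OF \<alpha> _ _ this] have "nbr t (g 1) (g 4) = 0"
      by simp
    then show False
      using lower frame_diag[of 1] frame_diag[of 4] nbr_nth(5)[of t "g 1" "g 4"] by simp
  next
    case 2
    then have "nbr t (g 3) (g 4) = 0"
      using lower by (simp add: vec7_eq_iff nbr_nth)
    then have "ip (nbr t (g 1) (g 2)) (g 3) = 0"
      using ricci_frame_identities(2)[OF \<alpha>] R by (simp add: zero_left algebra_simps)
    from nbr_frame_eq_0[OF \<alpha> _ _ this] have "nbr t (g 1) (g 2) = 0"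
      by simp
    then show False
      using nbr_frame_1_2 by simp
  qed
qed

end

theorem mainTheorem17:
  fixes t :: real
  shows "einstein_nilradical (nbr t) \<longleftrightarrow> t \<notin> {0, 1}"
proof
  assume "einstein_nilradical (nbr t)"
  then obtain ip b c D where ip: "inner_form ip" and b: "is_orthonormal_basis ip b"
    and D: "is_derivation (nbr t) D"
    and ricci: "\<And>x y. ricci_form_nil ip b (nbr t) x y = ip (c *\<^sub>R x + D x) y"
    unfolding einstein_nilradical_def is_nilsoliton_def inner_form_def by blast
  obtain g where g: "triangular_frame ip 1 g"
    using triangular_frame_exists[OF ip] by blast
  show "t \<notin> {0, 1}"
  proof
    assume t: "t \<in> {0, 1}"
    then interpret triangular_soliton ip t b c "D (e 1) $ 1" D g
      using ip[unfolded inner_form_def] b D ricci g derivation_triangular[OF D] by unfold_locales auto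
    show False
      using parameter_not_0_1 t by blast
  qed
next
  assume "t \<notin> {0, 1}"
  then show "einstein_nilradical (nbr t)"
    by (intro einstein_nilradical_nbr) auto
qed

end
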